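(* Let $n$ be even, $V=V_1\sqcup V_2$ with $|V_1|=|V_2|=n/2$, and $0\le q<p\le1$ with $p>0$. Consider the complete weighted graph on $V$ with $w(u,v)=p$ for distinct $u,v$ in the same block, $w(u,v)=q$ for $u,v$ in different blocks, and $w(v,v)=0$, and the cost $c(\{A,A^\complement\})=\sum_{u\in A,v\in A^\complement}w(u,v)$. If $\{A,A^\complement\}$ is a local minimum cut, then for each $i\in\{1,2\}$ either $V_i\subseteq A$ or $V_i\subseteq A^\complement$.
   Context: A cut $\{A,A^\complement\}$ of $V$ is a local minimum if moving any single vertex $v\in V$ to the other side (i.e., replacing the cut by $\{A\setminus\{v\},A^\complement\cup\{v\}\}$ if $v\in A$, or by $\{A\cup\{v\},A^\complement\setminus\{v\}\}$ if $v\in A^\complement$) does not decrease the cost. *)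

theory Defs
  imports Main "HOL.Real"
begin

definition block_weight :: "'a set \<Rightarrow> real \<Rightarrow> real \<Rightarrow> 'a \<Rightarrow> 'a \<Rightarrow> real" where
  "block_weight V1 p q u v =
     (if u = v then 0 else if (u \<in> V1) = (v \<in> V1) then p else q)"

definition cut_cost :: "('a \<Rightarrow> 'a \<Rightarrow> real) \<Rightarrow> 'a set \<Rightarrow> 'a set \<Rightarrow> real" where
  "cut_cost w V A = (\<Sum>u\<in>A. \<Sum>v\<in>V - A. w u v)"

definition local_min_cut :: "('a \<Rightarrow> 'a \<Rightarrow> real) \<Rightarrow> 'a set \<Rightarrow> 'a set \<Rightarrow> bool" where
  "local_min_cut w V A \<longleftrightarrow> A \<subseteq> V \<and>
     (\<forall>v\<in>V. cut_cost w V A \<le>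
        cut_cost w V (if v \<in> A then A - {v} else A \<union> {v}))"

end

theory Submission
  imports Defs
begin

text \<open>Two distinct vertices u, v of the same block are twins: they have the same weight to every
  third vertex. If a cut separated them, with v in A and u outside, then moving v out and moving
  u in change the cost by amounts whose sum is -2 w(u,v) = -2p < 0, so one of the two moves
  strictly decreases the cost.\<close>

lemma cut_cost_Diff_singleton:
  assumes "finite V" "A \<subseteq> V" "v \<in> A"
  shows "cut_cost w V (A - {v}) - cut_cost w V A
         = (\<Sum>u\<in>A - {v}. w u v) - (\<Sum>x\<in>V - A. w v x)"
proof -
  have "finite A" using assms finite_subset by blast
  have complement: "V - (A - {v}) = insert v (V - A)" using assms by auto
  have "cut_cost w V (A - {v}) = (\<Sum>u\<in>A - {v}. w u v + (\<Sum>x\<in>V - A. w u x))"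
    unfolding cut_cost_def complement using assms by (intro sum.cong) auto
  also have "\<dots> = (\<Sum>u\<in>A - {v}. w u v) + (\<Sum>u\<in>A - {v}. \<Sum>x\<in>V - A. w u x)"
    by (simp add: sum.distrib)
  finally show ?thesis
    unfolding cut_cost_def using \<open>finite A\<close> \<open>v \<in> A\<close> by (simp add: sum.remove)
qed

lemma cut_cost_insert:
  assumes "finite V" "A \<subseteq> V" "u \<in> V" "u \<notin> A"
  shows "cut_cost w V (A \<union> {u}) - cut_cost w V A
         = (\<Sum>x\<in>V - A - {u}. w u x) - (\<Sum>y\<in>A. w y u)"
proof -
  have "finite A" using assms finite_subset by blast
  have complement: "V - (A \<union> {u}) = V - A - {u}" by auto
  have "cut_cost w V A = (\<Sum>y\<in>A. w y u + (\<Sum>x\<in>V - A - {u}. w y x))"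
    unfolding cut_cost_def using assms
    by (intro sum.cong) (auto simp: sum.remove[of "V - A" u])
  also have "\<dots> = (\<Sum>y\<in>A. w y u) + (\<Sum>y\<in>A. \<Sum>x\<in>V - A - {u}. w y x)"
    by (simp add: sum.distrib)
  finally show ?thesis
    unfolding cut_cost_def complement using \<open>finite A\<close> assms by simp
qed

lemma local_min_cut_separated_twins_weight_nonpos:
  assumes "finite V" and sym: "\<And>x y. w x y = w y x"
    and lm: "local_min_cut w V A"
    and "v \<in> A" "u \<in> V" "u \<notin> A"
    and twins: "\<And>x. x \<noteq> u \<Longrightarrow> x \<noteq> v \<Longrightarrow> w u x = w v x"
  shows "w u v \<le> 0"
proof -
  have "A \<subseteq> V" "finite A"
    using lm \<open>finite V\<close> finite_subset unfolding local_min_cut_def by blast+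
  have "v \<in> V" using \<open>v \<in> A\<close> \<open>A \<subseteq> V\<close> by blast
  have move_v: "0 \<le> (\<Sum>x\<in>A - {v}. w x v) - (\<Sum>x\<in>V - A. w v x)"
    using lm \<open>v \<in> V\<close> \<open>v \<in> A\<close> cut_cost_Diff_singleton[OF \<open>finite V\<close> \<open>A \<subseteq> V\<close> \<open>v \<in> A\<close>, of w]
    unfolding local_min_cut_def by (metis diff_ge_0_iff_ge)
  have move_u: "0 \<le> (\<Sum>x\<in>V - A - {u}. w u x) - (\<Sum>y\<in>A. w y u)"
    using lm \<open>u \<in> V\<close> \<open>u \<notin> A\<close> cut_cost_insert[OF \<open>finite V\<close> \<open>A \<subseteq> V\<close> \<open>u \<in> V\<close> \<open>u \<notin> A\<close>, of w]
    unfolding local_min_cut_def by (metis diff_ge_0_iff_ge)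
  have "(\<Sum>x\<in>V - A. w v x) = w v u + (\<Sum>x\<in>V - A - {u}. w v x)"
    using \<open>finite V\<close> \<open>u \<in> V\<close> \<open>u \<notin> A\<close> by (simp add: sum.remove[of "V - A" u])
  also have "(\<Sum>x\<in>V - A - {u}. w v x) = (\<Sum>x\<in>V - A - {u}. w u x)"
    using twins \<open>v \<in> A\<close> by (intro sum.cong) (auto simp: eq_commute)
  finally have outside: "(\<Sum>x\<in>V - A. w v x) = w v u + (\<Sum>x\<in>V - A - {u}. w u x)" .
  have "(\<Sum>y\<in>A. w y u) = w v u + (\<Sum>y\<in>A - {v}. w y u)"
    using \<open>finite A\<close> \<open>v \<in> A\<close> by (simp add: sum.remove)
  also have "(\<Sum>y\<in>A - {v}. w y u) = (\<Sum>y\<in>A - {v}. w y v)"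
    using twins sym \<open>u \<notin> A\<close> by (intro sum.cong refl) (metis DiffE singletonI)
  finally have inside: "(\<Sum>y\<in>A. w y u) = w v u + (\<Sum>y\<in>A - {v}. w y v)" .
  show ?thesis using move_v move_u outside inside sym[of u v] by linarith
qed

lemma local_min_cut_block_weight_same_side:
  assumes "finite V" "p > 0"
    and lm: "local_min_cut (block_weight V1 p q) V A"
    and "W \<subseteq> V" and one_block: "W \<subseteq> V1 \<or> W \<inter> V1 = {}"
  shows "W \<subseteq> A \<or> W \<subseteq> V - A"
proof (rule ccontr)
  assume "\<not> ?thesis"
  then obtain v u where "v \<in> W" "v \<in> A" "u \<in> W" "u \<notin> A" using \<open>W \<subseteq> V\<close> by blast
  then have "u \<noteq> v" and same_block: "(u \<in> V1) = (v \<in> V1)" using one_block by auto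
  have "block_weight V1 p q u v \<le> 0"
    using \<open>u \<in> W\<close> \<open>W \<subseteq> V\<close> same_block
    by (intro local_min_cut_separated_twins_weight_nonpos[OF \<open>finite V\<close> _ lm \<open>v \<in> A\<close> _ \<open>u \<notin> A\<close>])
      (auto simp: block_weight_def)
  then show False using \<open>u \<noteq> v\<close> same_block \<open>p > 0\<close> by (simp add: block_weight_def)
qed

theorem lemma5:
  fixes V V1 V2 A :: "'a set" and n :: nat and p q :: real
  assumes "even n"
    and "finite V"
    and "V = V1 \<union> V2" and "V1 \<inter> V2 = {}"
    and "card V1 = n div 2" and "card V2 = n div 2"
    and "0 \<le> q" and "q < p" and "p \<le> 1" and "p > 0"
    and "local_min_cut (block_weight V1 p q) V A"
  shows "\<forall>Vi \<in> {V1, V2}. Vi \<subseteq> A \<or> Vi \<subseteq> V - A"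
  using local_min_cut_block_weight_same_side[OF \<open>finite V\<close> \<open>p > 0\<close> \<open>local_min_cut _ V A\<close>]
    \<open>V = V1 \<union> V2\<close> \<open>V1 \<inter> V2 = {}\<close> by (auto simp: Int_commute)

end
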